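(* For every $k\ge1$, $\mathfrak{L}(\mathbb{Z}^k)^w_{O(n)} \subsetneq \mathfrak{L}(\mathbb{Z}^{k+1})^w_{O(n)}$.
   Context: For a group $G$ with identity $e$, a $G$-automaton is a tuple $(Q,\Sigma,G,\delta,q_0,Q_a)$ where $Q$ is a finite set of states, $\Sigma$ a finite input alphabet, $q_0\in Q$ the initial state, $Q_a\subseteq Q$ the accepting states, and $\delta$ assigns to each $(q,\sigma)\in Q\times(\Sigma\cup\{\varepsilon\})$ a finite set of pairs $(q',m)\in Q\times G$. The register holds an element of $G$, initially $e$; using a transition $(q',m)\in\delta(q,\sigma)$ (one step) the automaton reads $\sigma$ (or nothing), moves to $q'$ and replaces the register content $x$ by $xm$. A word is accepted if some computation reads it entirely and ends in an accepting state with register equal to $e$. A $G$-automaton recognizing $\mathtt{L}$ is weakly $t(n)$ time-bounded if every $x\in\mathtt{L}$ with $|x|=n$ has an accepting computation of at most $t(n)$ steps; $\mathfrak{L}(G)^w_{O(n)}$ is the class of languages recognized by weakly $t(n)$ time-bounded $G$-automata for some $t(n)=O(n)$. $\mathbb{Z}^k$ is the additive group of integer vectors of dimension $k$. *)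

theory Defs
  imports Main
begin

text \<open>Elements of the group Z^k are represented as functions nat => int that
vanish outside the index range {0..<k}; the group operation is pointwise addition
and the identity is the zero function.\<close>

definition Zvec :: "nat \<Rightarrow> (nat \<Rightarrow> int) set" where
  "Zvec k = {v. \<forall>i\<ge>k. v i = 0}"

definition vadd :: "(nat \<Rightarrow> int) \<Rightarrow> (nat \<Rightarrow> int) \<Rightarrow> (nat \<Rightarrow> int)" where
  "vadd x m = (\<lambda>i. x i + m i)"

definition vzero :: "nat \<Rightarrow> int" where
  "vzero = (\<lambda>i. 0)"

text \<open>A Z^k-automaton (Q, Sigma, Z^k, delta, q0, Qa). States are natural numbers,
input letters are natural numbers (so any finite alphabet can be encoded),
and the epsilon label is None.\<close>

record zaut =
  states :: "nat set"
  alpha :: "nat set"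
  delta :: "nat \<Rightarrow> nat option \<Rightarrow> (nat \<times> (nat \<Rightarrow> int)) set"
  init :: nat
  acc :: "nat set"

definition is_Zk_automaton :: "nat \<Rightarrow> zaut \<Rightarrow> bool" where
  "is_Zk_automaton k A \<longleftrightarrow>
     finite (states A) \<and> finite (alpha A) \<and>
     init A \<in> states A \<and> acc A \<subseteq> states A \<and>
     (\<forall>q s. finite (delta A q s) \<and> delta A q s \<subseteq> states A \<times> Zvec k) \<and>
     (\<forall>q s. (q \<notin> states A \<or> (\<exists>a. s = Some a \<and> a \<notin> alpha A)) \<longrightarrow> delta A q s = {})"

inductive run :: "zaut \<Rightarrow> nat \<Rightarrow> (nat \<Rightarrow> int) \<Rightarrow> nat list \<Rightarrow> nat \<Rightarrow> (nat \<Rightarrow> int) \<Rightarrow> nat \<Rightarrow> bool"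
  for A where
  run_nil: "run A q x [] q x 0"
| run_read: "(p, m) \<in> delta A q (Some a) \<Longrightarrow> run A p (vadd x m) w q' y t
              \<Longrightarrow> run A q x (a # w) q' y (Suc t)"
| run_eps: "(p, m) \<in> delta A q None \<Longrightarrow> run A p (vadd x m) w q' y t
              \<Longrightarrow> run A q x w q' y (Suc t)"

definition accepts_in :: "zaut \<Rightarrow> nat list \<Rightarrow> nat \<Rightarrow> bool" where
  "accepts_in A w t \<longleftrightarrow> (\<exists>q. q \<in> acc A \<and> run A (init A) vzero w q vzero t)"

definition lang :: "zaut \<Rightarrow> nat list set" where
  "lang A = {w. \<exists>t. accepts_in A w t}"

definition weakly_time_bounded :: "zaut \<Rightarrow> (nat \<Rightarrow> nat) \<Rightarrow> bool" where
  "weakly_time_bounded A f \<longleftrightarrow>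
     (\<forall>w \<in> lang A. \<exists>t. t \<le> f (length w) \<and> accepts_in A w t)"

definition ZkLinLangs :: "nat \<Rightarrow> nat list set set" where
  "ZkLinLangs k = {L. \<exists>A f. is_Zk_automaton k A \<and> lang A = L \<and>
       (\<exists>c N. \<forall>n\<ge>N. f n \<le> c * n) \<and> weakly_time_bounded A f}"

end

theory Submission
  imports Defs
begin

text \<open>Over \<open>\<int>\<^sup>k\<close> the letters i and k + i (for i < k) can add and subtract the i-th unit
vector, so a one-state real-time automaton accepts the words in which each letter i < k occurs as
often as its partner k + i. With k + 1 such pairs but only k counters, linear time is not enough:
on the words 0^x_0 ... k^x_k (k+1)^x_0 ... (2k+1)^x_k with all x_i <= n, the configuration reached
after the first half is a state and a register of norm O(n), so it takes only O(n^k) values. Yet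
it must determine all (n+1)^(k+1) exponent vectors, because gluing the first half of one accepting
run to the second half of another yields an accepted word, which is balanced only if the two
vectors agree.\<close>

lemma vadd_Zvec: "x \<in> Zvec k \<Longrightarrow> m \<in> Zvec k \<Longrightarrow> vadd x m \<in> Zvec k"
  by (simp add: vadd_def Zvec_def)

lemma vzero_Zvec: "vzero \<in> Zvec k"
  by (simp add: vzero_def Zvec_def)

lemma Zvec_mono: "k \<le> k' \<Longrightarrow> Zvec k \<subseteq> Zvec k'"
  by (auto simp: Zvec_def)

lemma Zvec_eqI: "x \<in> Zvec k \<Longrightarrow> y \<in> Zvec k \<Longrightarrow> map x [0..<k] = map y [0..<k] \<Longrightarrow> x = y"
  by (auto simp: Zvec_def fun_eq_iff map_eq_conv)

lemma is_Zk_automaton_delta_Zvec: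
  "is_Zk_automaton k A \<Longrightarrow> (p, m) \<in> delta A q s \<Longrightarrow> m \<in> Zvec k"
  by (auto simp: is_Zk_automaton_def)

lemma is_Zk_automaton_delta_states:
  "is_Zk_automaton k A \<Longrightarrow> (p, m) \<in> delta A q s \<Longrightarrow> p \<in> states A"
  by (auto simp: is_Zk_automaton_def)

lemma run_append:
  "run A q x u p z t1 \<Longrightarrow> run A p z v q' y t2 \<Longrightarrow> run A q x (u @ v) q' y (t1 + t2)"
  by (induction rule: run.induct) (auto intro: run.intros)

lemma run_appendE:
  assumes "run A q x (u @ v) q' y t"
  obtains p z t1 t2 where "run A q x u p z t1" "run A p z v q' y t2" "t = t1 + t2"
proof -
  have "\<exists>p z t1 t2. run A q x u p z t1 \<and> run A p z v q' y t2 \<and> t = t1 + t2"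
    if "run A q x w q' y t" "w = u @ v" for w
    using that
  proof (induction arbitrary: u rule: run.induct)
    case (run_nil q x)
    then show ?case by (auto intro: run.intros)
  next
    case (run_read p m q a x w q' y t)
    show ?case
    proof (cases u)
      case Nil
      then show ?thesis
        using run_read by (metis add_0 append_Nil run.run_nil run.run_read)
    next
      case (Cons b u')
      with run_read obtain p' z t1 t2
        where "run A p (vadd x m) u' p' z t1" "run A p' z v q' y t2" "t = t1 + t2" "b = a"
        by auto
      then show ?thesis
        using Cons run_read(1) by (metis add_Suc run.run_read)
    qed
  next
    case (run_eps p m q x w q' y t)
    then obtain p' z t1 t2 where "run A p (vadd x m) u p' z t1" "run A p' z v q' y t2" "t = t1 + t2"
      by blast
    then show ?case
      using run_eps(1) by (metis add_Suc run.run_eps)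
  qed
  with assms that show ?thesis by blast
qed

definition weights_bounded :: "zaut \<Rightarrow> nat \<Rightarrow> bool" where
  "weights_bounded A M \<longleftrightarrow> (\<forall>q s p m i. (p, m) \<in> delta A q s \<longrightarrow> \<bar>m i\<bar> \<le> int M)"

lemma run_register_drift:
  assumes "weights_bounded A M"
  shows "run A q x w q' y t \<Longrightarrow> \<bar>y i - x i\<bar> \<le> int M * int t"
proof (induction rule: run.induct)
  case (run_read p m q a x w q' y t)
  have "\<bar>m i\<bar> \<le> int M" using assms run_read(1) by (auto simp: weights_bounded_def)
  with run_read(3) show ?case by (simp add: vadd_def algebra_simps)
next
  case (run_eps p m q x w q' y t)
  have "\<bar>m i\<bar> \<le> int M" using assms run_eps(1) by (auto simp: weights_bounded_def)
  with run_eps(3) show ?case by (simp add: vadd_def algebra_simps)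
qed simp

lemma run_Zvec:
  assumes "is_Zk_automaton k A"
  shows "run A q x w q' y t \<Longrightarrow> x \<in> Zvec k \<Longrightarrow> y \<in> Zvec k"
  by (induction rule: run.induct)
    (auto intro: vadd_Zvec is_Zk_automaton_delta_Zvec[OF assms])

lemma run_states:
  assumes "is_Zk_automaton k A"
  shows "run A q x w q' y t \<Longrightarrow> q \<in> states A \<Longrightarrow> q' \<in> states A"
  by (induction rule: run.induct) (auto dest: is_Zk_automaton_delta_states[OF assms])

lemma is_Zk_automaton_mono: "is_Zk_automaton k A \<Longrightarrow> k \<le> k' \<Longrightarrow> is_Zk_automaton k' A"
  unfolding is_Zk_automaton_def using Zvec_mono by (meson Sigma_mono order_refl subset_trans)

lemma ZkLinLangs_mono: "k \<le> k' \<Longrightarrow> ZkLinLangs k \<subseteq> ZkLinLangs k'"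
  unfolding ZkLinLangs_def using is_Zk_automaton_mono by blast

lemma is_Zk_automaton_weights_bounded:
  assumes A: "is_Zk_automaton k A"
  obtains M where "weights_bounded A M"
proof -
  define T where "T = (\<Union>q\<in>states A. \<Union>s\<in>insert None (Some ` alpha A). delta A q s)"
  have "finite T"
    using A unfolding T_def is_Zk_automaton_def by auto
  have in_T: "(p, m) \<in> T" if "(p, m) \<in> delta A q s" for p m q s
    using A that unfolding T_def is_Zk_automaton_def
    by (cases s) (auto, (metis empty_iff)+)
  define M where "M = (\<Sum>(p, m)\<in>T. \<Sum>i<k. nat \<bar>m i\<bar>)"
  have "\<bar>m i\<bar> \<le> int M" if "(p, m) \<in> delta A q s" for p m q s i
  proof (cases "i < k")
    case True
    have "nat \<bar>m i\<bar> \<le> (\<Sum>i<k. nat \<bar>m i\<bar>)"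
      using True by (intro member_le_sum) auto
    also have "\<dots> \<le> M"
      unfolding M_def
      using member_le_sum[OF in_T[OF that] _ \<open>finite T\<close>, of "\<lambda>(p, m). \<Sum>i<k. nat \<bar>m i\<bar>"]
      by simp
    finally show ?thesis by simp
  next
    case False
    then show ?thesis
      using is_Zk_automaton_delta_Zvec[OF A that] by (simp add: Zvec_def)
  qed
  then show ?thesis
    using that unfolding weights_bounded_def by blast
qed

lemma eventually_linear_bound_uniform:
  fixes f :: "nat \<Rightarrow> nat"
  assumes "\<forall>n\<ge>N. f n \<le> c * n"
  shows "\<exists>F. \<forall>n. f n \<le> c * n + F"
proof (intro exI allI)
  fix n
  show "f n \<le> c * n + (\<Sum>m<N. f m)"
  proof (cases "n < N")
    case True
    then have "f n \<le> (\<Sum>m<N. f m)" by (intro member_le_sum) auto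
    then show ?thesis by simp
  next
    case False
    then show ?thesis using assms by (simp add: trans_le_add1)
  qed
qed

definition letter_weight :: "nat \<Rightarrow> nat \<Rightarrow> nat \<Rightarrow> int" where
  "letter_weight k a = (\<lambda>i. if i < k \<and> a = i then 1 else if i < k \<and> a = k + i then -1 else 0)"

definition balance_aut :: "nat \<Rightarrow> zaut" where
  "balance_aut k = \<lparr>states = {0}, alpha = {..<2 * k},
     delta = (\<lambda>q s. case s of
                None \<Rightarrow> {}
              | Some a \<Rightarrow> if q = 0 \<and> a < 2 * k then {(0, letter_weight k a)} else {}),
     init = 0, acc = {0}\<rparr>"

definition excess :: "nat \<Rightarrow> nat list \<Rightarrow> nat \<Rightarrow> int" where
  "excess k w = (\<lambda>i. if i < k then int (count_list w i) - int (count_list w (k + i)) else 0)"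

definition balanced_lang :: "nat \<Rightarrow> nat list set" where
  "balanced_lang k = {w. set w \<subseteq> {..<2 * k} \<and> (\<forall>i<k. count_list w i = count_list w (k + i))}"

lemma excess_Nil: "excess k [] = vzero"
  by (simp add: excess_def vzero_def fun_eq_iff)

lemma excess_Cons: "excess k (a # w) = vadd (letter_weight k a) (excess k w)"
  by (auto simp: excess_def letter_weight_def vadd_def)

lemma run_balance_aut_imp:
  "run (balance_aut k) q x w q' y t \<Longrightarrow> q = 0 \<Longrightarrow>
     q' = 0 \<and> t = length w \<and> set w \<subseteq> {..<2 * k} \<and> y = vadd x (excess k w)"
proof (induction rule: run.induct)
  case (run_nil q x)
  then show ?case by (simp add: excess_Nil vadd_def vzero_def)
next
  case (run_read p m q a x w q' y t)
  then have "p = 0" "a < 2 * k" "m = letter_weight k a"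
    by (auto simp: balance_aut_def split: if_splits)
  with run_read show ?case
    by (auto simp: excess_Cons vadd_def add.assoc)
next
  case (run_eps p m q x w q' y t)
  then show ?case by (simp add: balance_aut_def)
qed

lemma run_balance_aut:
  "set w \<subseteq> {..<2 * k} \<Longrightarrow> run (balance_aut k) 0 x w 0 (vadd x (excess k w)) (length w)"
proof (induction w arbitrary: x)
  case Nil
  have "vadd x (excess k []) = x"
    by (simp add: excess_Nil vadd_def vzero_def)
  then show ?case
    using run_nil[of "balance_aut k" 0 x] by simp
next
  case (Cons a w)
  have step: "(0, letter_weight k a) \<in> delta (balance_aut k) 0 (Some a)"
    using Cons.prems by (simp add: balance_aut_def)
  have "run (balance_aut k) 0 (vadd x (letter_weight k a)) w
          0 (vadd (vadd x (letter_weight k a)) (excess k w)) (length w)"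
    using Cons by simp
  moreover have "vadd (vadd x (letter_weight k a)) (excess k w) = vadd x (excess k (a # w))"
    by (simp add: excess_Cons vadd_def add.assoc)
  ultimately show ?case
    using run_read[OF step] by (metis length_Cons)
qed

lemma run_balance_aut_iff:
  "run (balance_aut k) 0 x w q y t \<longleftrightarrow>
     q = 0 \<and> t = length w \<and> set w \<subseteq> {..<2 * k} \<and> y = vadd x (excess k w)"
  using run_balance_aut_imp[of k 0 x w q y t] run_balance_aut[of w k x] by auto

lemma init_balance_aut [simp]: "init (balance_aut k) = 0"
  and acc_balance_aut [simp]: "acc (balance_aut k) = {0}"
  by (simp_all add: balance_aut_def)

lemma accepts_in_balance_aut_iff:
  "accepts_in (balance_aut k) w t \<longleftrightarrow> t = length w \<and> w \<in> balanced_lang k"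
proof -
  have "vadd vzero (excess k w) = vzero \<longleftrightarrow> (\<forall>i<k. count_list w i = count_list w (k + i))"
    by (auto simp: vadd_def vzero_def excess_def fun_eq_iff)
  then show ?thesis
    by (auto simp: accepts_in_def balanced_lang_def run_balance_aut_iff)
qed

lemma lang_balance_aut: "lang (balance_aut k) = balanced_lang k"
  by (auto simp: lang_def accepts_in_balance_aut_iff)

lemma balance_aut_real_time: "weakly_time_bounded (balance_aut k) (\<lambda>n. n)"
  by (auto simp: weakly_time_bounded_def lang_balance_aut accepts_in_balance_aut_iff)

lemma is_Zk_automaton_balance_aut: "is_Zk_automaton k (balance_aut k)"
  by (auto simp: is_Zk_automaton_def balance_aut_def Zvec_def letter_weight_def
      split: option.splits if_splits)

lemma balanced_lang_in_ZkLinLangs: "balanced_lang k \<in> ZkLinLangs k"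
  unfolding ZkLinLangs_def mem_Collect_eq
  by (intro exI[of _ "balance_aut k"] exI[of _ "\<lambda>n. n"] exI[of _ "1::nat"] conjI
      is_Zk_automaton_balance_aut lang_balance_aut balance_aut_real_time) simp

fun blocks :: "nat \<Rightarrow> nat list \<Rightarrow> nat list" where
  "blocks b [] = []"
| "blocks b (x # xs) = replicate x b @ blocks (Suc b) xs"

lemma count_list_replicate: "count_list (replicate n a) b = (if a = b then n else 0)"
  by (induction n) auto

lemma count_list_blocks:
  "count_list (blocks b xs) j = (if b \<le> j \<and> j < b + length xs then xs ! (j - b) else 0)"
proof (induction xs arbitrary: b)
  case (Cons x xs)
  show ?case
    by (auto simp: count_list_replicate Cons nth_Cons' Suc_diff_Suc)
qed simp

lemma set_blocks: "set (blocks b xs) \<subseteq> {b..<b + length xs}"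
  by (induction xs arbitrary: b) fastforce+

lemma length_blocks: "length (blocks b xs) = sum_list xs"
  by (induction xs arbitrary: b) auto

lemma blocks_append_balanced_iff:
  assumes "length xs = k" "length ys = k"
  shows "blocks 0 xs @ blocks k ys \<in> balanced_lang k \<longleftrightarrow> xs = ys"
proof -
  have "set (blocks 0 xs @ blocks k ys) \<subseteq> {..<2 * k}"
    using set_blocks[of 0 xs] set_blocks[of k ys] assms by auto
  moreover have "(\<forall>i<k. count_list (blocks 0 xs @ blocks k ys) i
                      = count_list (blocks 0 xs @ blocks k ys) (k + i)) \<longleftrightarrow> xs = ys"
  proof
    assume balanced: "\<forall>i<k. count_list (blocks 0 xs @ blocks k ys) i
                              = count_list (blocks 0 xs @ blocks k ys) (k + i)"
    show "xs = ys"
    proof (rule nth_equalityI)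
      fix i assume "i < length xs"
      then show "xs ! i = ys ! i"
        using balanced[rule_format, of i] assms by (simp add: count_list_blocks)
    qed (simp add: assms)
  qed (simp add: count_list_blocks assms)
  ultimately show ?thesis
    unfolding balanced_lang_def by blast
qed

lemma accepted_run_bounded_midpoint:
  assumes A: "is_Zk_automaton k A"
    and weights: "weights_bounded A M"
    and "t \<le> T" and "accepts_in A (u @ v) t"
  obtains q y where "q \<in> states A" "y \<in> Zvec k" "\<And>i. \<bar>y i\<bar> \<le> int (M * T)"
    "\<exists>t1. run A (init A) vzero u q y t1" "\<exists>qf t2. qf \<in> acc A \<and> run A q y v qf vzero t2"
proof -
  obtain qf where qf: "qf \<in> acc A" "run A (init A) vzero (u @ v) qf vzero t"
    using assms(4) unfolding accepts_in_def by blast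
  then obtain q y t1 t2 where u: "run A (init A) vzero u q y t1"
    and v: "run A q y v qf vzero t2" and "t = t1 + t2"
    by (blast elim: run_appendE)
  have "q \<in> states A"
    using run_states[OF A u] A by (simp add: is_Zk_automaton_def)
  moreover have "y \<in> Zvec k"
    using run_Zvec[OF A u vzero_Zvec] .
  moreover have "\<bar>y i\<bar> \<le> int (M * T)" for i
  proof -
    have "\<bar>y i - vzero i\<bar> \<le> int M * int t1"
      by (rule run_register_drift[OF weights u])
    then have "\<bar>y i\<bar> \<le> int M * int t1"
      by (simp add: vzero_def)
    also have "\<dots> \<le> int (M * T)"
      using \<open>t \<le> T\<close> \<open>t = t1 + t2\<close> by (simp flip: of_nat_mult)
    finally show ?thesis .
  qed
  ultimately show ?thesis
    using that u v qf(1) by blast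
qed

lemma card_fooling_set_le:
  assumes A: "is_Zk_automaton k A"
    and weights: "weights_bounded A M"
    and accepted: "\<And>x. x \<in> X \<Longrightarrow> \<exists>t\<le>T. accepts_in A (u x @ v x) t"
    and fooling: "\<And>x x'. x \<in> X \<Longrightarrow> x' \<in> X \<Longrightarrow> u x @ v x' \<in> lang A \<Longrightarrow> x = x'"
  shows "card X \<le> card (states A) * (2 * (M * T) + 1) ^ k"
proof -
  define B where "B = M * T"
  define R where "R = {ys. set ys \<subseteq> {- int B..int B} \<and> length ys = k}"
  define midpoint where "midpoint x q y \<longleftrightarrow>
      q \<in> states A \<and> y \<in> Zvec k \<and> (\<forall>i. \<bar>y i\<bar> \<le> int B) \<and>
      (\<exists>t1. run A (init A) vzero (u x) q y t1) \<and>
      (\<exists>qf t2. qf \<in> acc A \<and> run A q y (v x) qf vzero t2)" for x q y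
  have "\<exists>qy. midpoint x (fst qy) (snd qy)" if x: "x \<in> X" for x
  proof -
    obtain t where "t \<le> T" "accepts_in A (u x @ v x) t"
      using accepted[OF x] by blast
    then show ?thesis
      using accepted_run_bounded_midpoint[OF A weights] unfolding midpoint_def B_def
      by (metis fst_conv snd_conv)
  qed
  then obtain c where c: "\<And>x. x \<in> X \<Longrightarrow> midpoint x (fst (c x)) (snd (c x))"
    by metis
  define encode where "encode x = (fst (c x), map (snd (c x)) [0..<k])" for x
  have "encode x \<in> states A \<times> R" if "x \<in> X" for x
    using c[OF that] unfolding midpoint_def encode_def R_def by (force simp: abs_le_iff)
  then have "encode ` X \<subseteq> states A \<times> R"
    by blast
  moreover have "inj_on encode X"
  proof
    fix x x' assume "x \<in> X" "x' \<in> X" and eq: "encode x = encode x'"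
    obtain t1 where u: "run A (init A) vzero (u x) (fst (c x)) (snd (c x)) t1"
      using c[OF \<open>x \<in> X\<close>] unfolding midpoint_def by blast
    obtain qf t2 where "qf \<in> acc A" and v: "run A (fst (c x')) (snd (c x')) (v x') qf vzero t2"
      using c[OF \<open>x' \<in> X\<close>] unfolding midpoint_def by blast
    have "snd (c x) = snd (c x')"
      using c[OF \<open>x \<in> X\<close>] c[OF \<open>x' \<in> X\<close>] eq
      unfolding midpoint_def encode_def by (auto intro: Zvec_eqI)
    with eq u v have "run A (init A) vzero (u x @ v x') qf vzero (t1 + t2)"
      unfolding encode_def by (auto intro: run_append)
    with \<open>qf \<in> acc A\<close> have "u x @ v x' \<in> lang A"
      unfolding lang_def accepts_in_def by blast
    then show "x = x'"
      using fooling \<open>x \<in> X\<close> \<open>x' \<in> X\<close> by blast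
  qed
  moreover have "finite (states A \<times> R)"
    using A unfolding R_def is_Zk_automaton_def by (simp add: finite_lists_length_eq)
  ultimately have "card X \<le> card (states A \<times> R)"
    by (intro card_inj_on_le)
  also have "\<dots> = card (states A) * (2 * B + 1) ^ k"
  proof -
    have "card {- int B..int B} = 2 * B + 1"
      by simp
    then show ?thesis
      unfolding R_def card_cartesian_product by (simp add: card_lists_length_eq)
  qed
  finally show ?thesis
    unfolding B_def .
qed

lemma sum_list_le_length_mult:
  fixes xs :: "nat list"
  shows "(\<And>x. x \<in> set xs \<Longrightarrow> x \<le> n) \<Longrightarrow> sum_list xs \<le> length xs * n"
  using sum_list_mono[of xs id "\<lambda>_. n"] by (simp add: sum_list_triv)

lemma balanced_lang_notin_ZkLinLangs: "balanced_lang (Suc k) \<notin> ZkLinLangs k"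
proof
  assume "balanced_lang (Suc k) \<in> ZkLinLangs k"
  then obtain A f c N where A: "is_Zk_automaton k A" and L: "lang A = balanced_lang (Suc k)"
    and linear: "\<forall>n\<ge>N. f n \<le> c * n" and time: "weakly_time_bounded A f"
    unfolding ZkLinLangs_def by blast
  obtain F where F: "\<And>n. f n \<le> c * n + F"
    using eventually_linear_bound_uniform[OF linear] by blast
  obtain M where M: "weights_bounded A M"
    using is_Zk_automaton_weights_bounded[OF A] .
  text \<open>D is chosen so that the register bound 2 M T + 1 is at most D (n + 1); then for
    n = |Q| D^k the (n+1)^(k+1) exponent vectors in {0..n}^(k+1) outnumber the at most
    |Q| (D (n+1))^k = n (n+1)^k midpoint configurations.\<close>
  define D where "D = 4 * M * c * Suc k + 2 * M * F + 1"
  define n where "n = card (states A) * D ^ k"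
  define T where "T = c * (2 * Suc k * n) + F"
  define X where "X = {xs. set xs \<subseteq> {0..n} \<and> length xs = Suc k}"
  have "card X \<le> card (states A) * (2 * (M * T) + 1) ^ k"
  proof (rule card_fooling_set_le[OF A M])
    fix xs assume "xs \<in> X"
    then have len: "length xs = Suc k" and bounded: "\<And>x. x \<in> set xs \<Longrightarrow> x \<le> n"
      unfolding X_def by auto
    have "sum_list xs \<le> length xs * n"
      by (rule sum_list_le_length_mult) (rule bounded)
    with len have "sum_list xs \<le> Suc k * n"
      by simp
    then have "length (blocks 0 xs @ blocks (Suc k) xs) \<le> 2 * Suc k * n"
      by (simp add: length_blocks)
    then have "f (length (blocks 0 xs @ blocks (Suc k) xs)) \<le> T"
      unfolding T_def using F by (meson add_le_mono1 le_trans mult_le_mono2)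
    moreover have "blocks 0 xs @ blocks (Suc k) xs \<in> lang A"
      using blocks_append_balanced_iff[OF len len] L by simp
    ultimately show "\<exists>t\<le>T. accepts_in A (blocks 0 xs @ blocks (Suc k) xs) t"
      using time unfolding weakly_time_bounded_def by (meson le_trans)
  next
    fix xs ys assume "xs \<in> X" "ys \<in> X" "blocks 0 xs @ blocks (Suc k) ys \<in> lang A"
    then show "xs = ys"
      using blocks_append_balanced_iff L unfolding X_def by auto
  qed
  also have "\<dots> \<le> card (states A) * (D * (n + 1)) ^ k"
    unfolding T_def D_def by (intro mult_le_mono2 power_mono) (simp_all add: algebra_simps)
  also have "\<dots> = (card (states A) * D ^ k) * (n + 1) ^ k"
    by (simp only: power_mult_distrib mult.assoc)
  also have "\<dots> = n * (n + 1) ^ k"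
    by (simp only: n_def)
  also have "\<dots> < (n + 1) ^ Suc k"
    by simp
  also have "\<dots> = card X"
    unfolding X_def by (simp add: card_lists_length_eq)
  finally show False
    by simp
qed

theorem theorem4p11:
  fixes k :: nat
  assumes "k \<ge> 1"
  shows "ZkLinLangs k \<subset> ZkLinLangs (k + 1)"
proof
  show "ZkLinLangs k \<subseteq> ZkLinLangs (k + 1)"
    by (rule ZkLinLangs_mono) simp
  show "ZkLinLangs k \<noteq> ZkLinLangs (k + 1)"
    using balanced_lang_in_ZkLinLangs[of "Suc k"] balanced_lang_notin_ZkLinLangs[of k] by auto
qed

end
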